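(* Let $K=(\mathbf{k}_1,\dots,\mathbf{k}_6)\in(\mathbb{R}^2)^6$ be a 3-RPR configuration whose base anchor points $\mathbf{k}_1,\mathbf{k}_2,\mathbf{k}_3\in\mathbb{R}^2$ are fixed and whose platform anchor points are $\mathbf{k}_j=\mathbf{R}\mathbf{p}_j+\mathbf{t}$ ($j=4,5,6$) for fixed $\mathbf{p}_4,\mathbf{p}_5,\mathbf{p}_6\in\mathbb{R}^2$ and a pose $(\mathbf{R},\mathbf{t})$ with $\mathbf{R}\in SO(2)$, $\mathbf{t}\in\mathbb{R}^2$. Let $D$ be either $D^{\vartriangle}_{\blacktriangle}$ or $D^{\vartriangle}_{\vartriangle}$. If $K'=(\mathbf{k}'_1,\dots,\mathbf{k}'_6)$ is a closest configuration to $K$ on the collinearity variety $C_P=0$, i.e. a global minimizer of $D(K,K')$ over all $K'\in\mathbb{R}^{12}$ with $C_P(K')=0$, then $\mathbf{k}'_4,\mathbf{k}'_5,\mathbf{k}'_6$ are the pedal points (orthogonal projections) of $\mathbf{k}_4,\mathbf{k}_5,\mathbf{k}_6$ on the line of regression of $\mathbf{k}_4,\mathbf{k}_5,\mathbf{k}_6$. Moreover, the distance $\min\{D(K,K'):C_P(K')=0\}$ depends only on the geometry of the manipulator, i.e. it is independent of the pose $(\mathbf{R},\mathbf{t})$.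
   Context: A configuration is $K'=(\mathbf{k}'_1,\dots,\mathbf{k}'_6)$ with $\mathbf{k}'_i=(c_i,d_i)^T\in\mathbb{R}^2$, viewed as a point of $\mathbb{R}^{12}$. For indices $i,j$ define the segment distance $d(\vert_{ij},\vert'_{ij})^2=\frac13\big[\|\mathbf{k}_i-\mathbf{k}'_i\|^2+\|\mathbf{k}_j-\mathbf{k}'_j\|^2+(\mathbf{k}_i-\mathbf{k}'_i)^T(\mathbf{k}_j-\mathbf{k}'_j)\big]$ and for $\{i,j,k\}$ the triangle distance $d(\blacktriangle_{ijk},\blacktriangle'_{ijk})^2=\frac16\big[\sum_{x=i,j,k}\|\mathbf{k}_x-\mathbf{k}'_x\|^2+(\mathbf{k}_i-\mathbf{k}'_i)^T(\mathbf{k}_k-\mathbf{k}'_k)+(\mathbf{k}_i-\mathbf{k}'_i)^T(\mathbf{k}_j-\mathbf{k}'_j)+(\mathbf{k}_k-\mathbf{k}'_k)^T(\mathbf{k}_j-\mathbf{k}'_j)\big]$. Then $D^{\vartriangle}_{\blacktriangle}(K,K')^2=\frac17\big[\sum_{(i,j)\in I_2}d(\vert_{ij},\vert'_{ij})^2+d(\blacktriangle_{123},\blacktriangle'_{123})^2\big]$ with $I_2=\{(1,4),(2,5),(3,6),(4,5),(4,6),(5,6)\}$, and $D^{\vartriangle}_{\vartriangle}(K,K')^2=\frac19\sum_{(i,j)\in I_4}d(\vert_{ij},\vert'_{ij})^2$ with $I_4=\{(1,2),(2,3),(1,3),(1,4),(2,5),(3,6),(4,5),(5,6),(4,6)\}$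 (distances are the nonnegative square roots). The collinearity polynomial of the platform is $C_P(K')=\det\begin{pmatrix}1&1&1\\ c_4&c_5&c_6\\ d_4&d_5&d_6\end{pmatrix}$. The line of regression of three points is the line minimizing the sum of squared orthogonal distances to these points; the pedal point of a point on a line is its orthogonal projection onto that line. *)

theory Defs
  imports "HOL-Analysis.Analysis"
begin

text \<open>A configuration K = (k_1,...,k_6) is a map from indices to points of the plane;
  only the indices 1..6 are relevant. Coordinates: k = (c,d) with c = k$1, d = k$2.\<close>
type_synonym config = "nat \<Rightarrow> real^2"

definition seg_dist :: "config \<Rightarrow> config \<Rightarrow> nat \<Rightarrow> nat \<Rightarrow> real" where
  "seg_dist K K' i j = sqrt ((1/3) * (norm (K i - K' i)^2 + norm (K j - K' j)^2
      + (K i - K' i) \<bullet> (K j - K' j)))"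

definition tri_dist :: "config \<Rightarrow> config \<Rightarrow> nat \<Rightarrow> nat \<Rightarrow> nat \<Rightarrow> real" where
  "tri_dist K K' i j k = sqrt ((1/6) * (norm (K i - K' i)^2 + norm (K j - K' j)^2 + norm (K k - K' k)^2
      + (K i - K' i) \<bullet> (K k - K' k) + (K i - K' i) \<bullet> (K j - K' j) + (K k - K' k) \<bullet> (K j - K' j)))"

definition I2 :: "(nat \<times> nat) set" where
  "I2 = {(1,4),(2,5),(3,6),(4,5),(4,6),(5,6)}"

definition I4 :: "(nat \<times> nat) set" where
  "I4 = {(1,2),(2,3),(1,3),(1,4),(2,5),(3,6),(4,5),(5,6),(4,6)}"

definition D_tri_full :: "config \<Rightarrow> config \<Rightarrow> real" where
  "D_tri_full K K' = sqrt ((1/7) * ((\<Sum>(i,j)\<in>I2. (seg_dist K K' i j)^2) + (tri_dist K K' 1 2 3)^2))"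

definition D_tri_tri :: "config \<Rightarrow> config \<Rightarrow> real" where
  "D_tri_tri K K' = sqrt ((1/9) * (\<Sum>(i,j)\<in>I4. (seg_dist K K' i j)^2))"

text \<open>Collinearity polynomial of the platform: det [[1,1,1],[c4,c5,c6],[d4,d5,d6]].\<close>
definition C_P :: "config \<Rightarrow> real" where
  "C_P K = (K 5 $ 1 * K 6 $ 2 - K 6 $ 1 * K 5 $ 2)
         - (K 4 $ 1 * K 6 $ 2 - K 6 $ 1 * K 4 $ 2)
         + (K 4 $ 1 * K 5 $ 2 - K 5 $ 1 * K 4 $ 2)"

definition SO2 :: "(real^2^2) set" where
  "SO2 = {R. orthogonal_matrix R \<and> det R = 1}"

definition pose_config :: "config \<Rightarrow> config \<Rightarrow> real^2^2 \<Rightarrow> real^2 \<Rightarrow> config" where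
  "pose_config b p R t = (\<lambda>i. if i \<le> 3 then b i else R *v p i + t)"

definition is_line :: "(real^2) set \<Rightarrow> bool" where
  "is_line L \<longleftrightarrow> (\<exists>a u. u \<noteq> 0 \<and> L = {a + s *\<^sub>R u | s. True})"

definition regression_line :: "config \<Rightarrow> (real^2) set \<Rightarrow> bool" where
  "regression_line K L \<longleftrightarrow> is_line L \<and>
     (\<forall>L'. is_line L' \<longrightarrow> (\<Sum>j\<in>{4,5,6}. (infdist (K j) L)^2) \<le> (\<Sum>j\<in>{4,5,6}. (infdist (K j) L')^2))"

definition pedal_point :: "real^2 \<Rightarrow> (real^2) set \<Rightarrow> real^2 \<Rightarrow> bool" where
  "pedal_point x L q \<longleftrightarrow> q \<in> L \<and> (\<forall>y\<in>L. (x - q) \<bullet> (y - q) = 0)"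

end

theory Submission
  imports Defs
begin

(* Write e_i = k_i - k'_i. Both squared metrics are positive semidefinite quadratic forms in
   e_1,...,e_6, and the collinearity constraint involves only k'_4, k'_5, k'_6. Completing the
   square in the free base errors e_1, e_2, e_3 therefore leaves the platform form
   alpha (|e_4|^2 + |e_5|^2 + |e_6|^2) + beta |e_4 + e_5 + e_6|^2 with alpha > 0, beta >= 0.
   Translating three collinear points keeps them collinear, so at a minimiser the errors sum to
   zero and only the total least squares term alpha (|e_4|^2 + |e_5|^2 + |e_6|^2) remains: its
   constrained minimisers are the pedal points on a line of regression. Both metrics depend only
   on the errors and are invariant under rotating them, and a change of pose is a rigid motion
   of the platform which preserves the collinearity variety, so the minimal distance does not
   depend on the pose. *)

section \<open>Lines and orthogonal projection\<close>

definition line :: "'a::real_vector \<Rightarrow> 'a \<Rightarrow> 'a set" where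
  "line c u = {c + s *\<^sub>R u | s. True}"

lemma mem_line: "x \<in> line c u \<longleftrightarrow> (\<exists>s. x = c + s *\<^sub>R u)"
  by (simp add: line_def)

lemma collinear_subset_line:
  fixes S :: "'a::{perfect_space,real_vector} set"
  assumes "collinear S"
  shows "\<exists>c u. u \<noteq> 0 \<and> S \<subseteq> line c u"
proof -
  obtain u where "u \<noteq> 0" and u: "\<forall>x\<in>S. \<forall>y\<in>S. \<exists>s. x - y = s *\<^sub>R u"
    using assms collinear by blast
  show ?thesis
  proof (cases "S = {}")
    case False
    then obtain c where "c \<in> S" by blast
    have "x \<in> line c u" if "x \<in> S" for x
    proof -
      obtain s where "x - c = s *\<^sub>R u" using u \<open>c \<in> S\<close> \<open>x \<in> S\<close> by blast
      then have "x = c + s *\<^sub>R u" by (simp add: diff_eq_eq add.commute)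
      then show ?thesis unfolding mem_line by blast
    qed
    then show ?thesis using \<open>u \<noteq> 0\<close> by blast
  qed (use \<open>u \<noteq> 0\<close> in blast)
qed

lemma subset_line_collinear: "S \<subseteq> line c u \<Longrightarrow> collinear S"
  unfolding collinear_alt line_def by blast

(* For u = 0 the line degenerates to {c} and, as x / 0 = 0, line_proj c 0 x = c; so none of the
   lemmas below needs u \<noteq> 0. *)
definition line_proj :: "'a::real_inner \<Rightarrow> 'a \<Rightarrow> 'a \<Rightarrow> 'a" where
  "line_proj c u x = c + ((x - c) \<bullet> u / (u \<bullet> u)) *\<^sub>R u"

lemma line_proj_in_line: "line_proj c u x \<in> line c u"
  unfolding line_proj_def mem_line by blast

lemma orthogonal_line_proj:
  assumes "y \<in> line c u"
  shows "orthogonal (x - line_proj c u x) (y - line_proj c u x)"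
proof -
  obtain s where y: "y = c + s *\<^sub>R u" using assms mem_line by blast
  have "(x - line_proj c u x) \<bullet> u = 0"
    by (cases "u = 0") (simp_all add: line_proj_def inner_diff_left inner_add_left)
  moreover have "y - line_proj c u x = (s - (x - c) \<bullet> u / (u \<bullet> u)) *\<^sub>R u"
    unfolding y line_proj_def by (simp add: algebra_simps)
  ultimately show ?thesis by (simp add: orthogonal_def)
qed

lemma dist_line_proj_Pythagorean:
  assumes "y \<in> line c u"
  shows "(dist x y)\<^sup>2 = (dist x (line_proj c u x))\<^sup>2 + (dist (line_proj c u x) y)\<^sup>2"
proof -
  let ?p = "line_proj c u x"
  have orth: "orthogonal (x - ?p) (?p - y)"
    using orthogonal_line_proj[OF assms, of x] by (simp add: orthogonal_def inner_diff_right)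
  have xy: "x - y = (x - ?p) + (?p - y)" by simp
  show ?thesis
    unfolding dist_norm xy by (rule norm_add_Pythagorean[OF orth])
qed

lemma infdist_line: "infdist x (line c u) = dist x (line_proj c u x)"
proof (rule antisym)
  show "infdist x (line c u) \<le> dist x (line_proj c u x)"
    by (rule infdist_le[OF line_proj_in_line])
  have "dist x (line_proj c u x) \<le> dist x y" if "y \<in> line c u" for y
  proof (rule power2_le_imp_le)
    show "(dist x (line_proj c u x))\<^sup>2 \<le> (dist x y)\<^sup>2"
      using dist_line_proj_Pythagorean[OF that, of x] by simp
  qed simp
  moreover have ne: "line c u \<noteq> {}" using line_proj_in_line by blast
  ultimately show "dist x (line_proj c u x) \<le> infdist x (line c u)"
    unfolding infdist_notempty[OF ne] by (intro cINF_greatest[OF ne])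
qed

lemma nearest_point_on_line_eq_line_proj:
  assumes "y \<in> line c u" and "dist x y \<le> infdist x (line c u)"
  shows "y = line_proj c u x"
proof -
  have "dist x y \<le> dist x (line_proj c u x)"
    using assms(2) by (simp only: infdist_line)
  then have "(dist x y)\<^sup>2 \<le> (dist x (line_proj c u x))\<^sup>2"
    by (simp add: power_mono)
  then have "(dist (line_proj c u x) y)\<^sup>2 \<le> 0"
    using dist_line_proj_Pythagorean[OF assms(1), of x] by linarith
  then show ?thesis by simp
qed

lemma
  fixes w :: "'b \<Rightarrow> 'a::real_inner"
  assumes "finite J" and "J \<noteq> {}"
  defines "m \<equiv> (1 / real (card J)) *\<^sub>R (\<Sum>j\<in>J. w j)"
  shows sum_diff_mean_eq_0: "(\<Sum>j\<in>J. w j - m) = 0"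
    and sum_norm_diff_mean_le: "(\<Sum>j\<in>J. (norm (w j - m))\<^sup>2) \<le> (\<Sum>j\<in>J. (norm (w j))\<^sup>2)"
proof -
  have n: "real (card J) > 0" using assms by (simp add: card_gt_0_iff)
  have sum_w: "(\<Sum>j\<in>J. w j) = real (card J) *\<^sub>R m"
    using n by (simp add: m_def)
  show "(\<Sum>j\<in>J. w j - m) = 0"
    unfolding sum_subtractf sum_w real_vector.sum_constant_scale by simp
  have "(norm (w j - m))\<^sup>2 = (norm (w j))\<^sup>2 - 2 * (w j \<bullet> m) + (norm m)\<^sup>2" for j
    using dot_norm_neg[of "w j" m] by argo
  then have "(\<Sum>j\<in>J. (norm (w j - m))\<^sup>2)
      = (\<Sum>j\<in>J. (norm (w j))\<^sup>2) - 2 * ((\<Sum>j\<in>J. w j) \<bullet> m) + real (card J) * (norm m)\<^sup>2"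
    by (simp add: sum.distrib sum_subtractf sum_distrib_left inner_sum_left)
  also have "\<dots> = (\<Sum>j\<in>J. (norm (w j))\<^sup>2) - real (card J) * (norm m)\<^sup>2"
    unfolding sum_w by (simp add: power2_norm_eq_inner)
  finally show "(\<Sum>j\<in>J. (norm (w j - m))\<^sup>2) \<le> (\<Sum>j\<in>J. (norm (w j))\<^sup>2)"
    using n by simp
qed

section \<open>Collinear platforms and the line of regression\<close>

lemma inner_vec2: "(v::real^2) \<bullet> w = v$1 * w$1 + v$2 * w$2"
  by (simp add: inner_vec_def sum_2)

lemma power2_norm_vec2: "(norm (v::real^2))\<^sup>2 = (v$1)\<^sup>2 + (v$2)\<^sup>2"
  unfolding power2_norm_eq_inner by (simp add: inner_vec2 power2_eq_square)

lemma cross2_eq_0_iff: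
  fixes x y :: "real^2"
  shows "x$1 * y$2 - y$1 * x$2 = 0 \<longleftrightarrow> x = 0 \<or> y = 0 \<or> (\<exists>c. y = c *\<^sub>R x)"
proof
  assume cross: "x$1 * y$2 - y$1 * x$2 = 0"
  show "x = 0 \<or> y = 0 \<or> (\<exists>c. y = c *\<^sub>R x)"
  proof (cases "x = 0")
    case False
    then have "x \<bullet> x \<noteq> 0" by simp
    then have "y = ((y \<bullet> x) / (x \<bullet> x)) *\<^sub>R x"
      using cross unfolding inner_vec2 by (simp add: vec_eq_iff forall_2 field_simps)
    then show ?thesis by blast
  qed simp
qed auto

lemma C_P_eq_0_iff_collinear: "C_P K = 0 \<longleftrightarrow> collinear {K 4, K 5, K 6}"
proof -
  have "C_P K = (K 5 - K 4)$1 * (K 6 - K 4)$2 - (K 6 - K 4)$1 * (K 5 - K 4)$2"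
    unfolding C_P_def by (simp add: algebra_simps)
  moreover have "collinear {K 4, K 5, K 6} \<longleftrightarrow> collinear {0, K 5 - K 4, K 6 - K 4}"
    using collinear_3[of "K 5" "K 4" "K 6"] by (simp add: insert_commute)
  ultimately show ?thesis
    by (simp only: cross2_eq_0_iff collinear_lemma)
qed

lemma C_P_cong: "(\<And>j. j \<in> {4,5,6} \<Longrightarrow> K j = K' j) \<Longrightarrow> C_P K = C_P K'"
  unfolding C_P_def by simp

lemma is_line_iff: "is_line L \<longleftrightarrow> (\<exists>c u. u \<noteq> 0 \<and> L = line c u)"
  unfolding is_line_def line_def ..

lemma pedal_point_line_proj: "pedal_point x (line c u) (line_proj c u x)"
  unfolding pedal_point_def orthogonal_def[symmetric]
  using line_proj_in_line orthogonal_line_proj by blast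

definition platform_quad :: "real \<Rightarrow> real \<Rightarrow> config \<Rightarrow> config \<Rightarrow> real" where
  "platform_quad \<alpha> \<beta> K K' = \<alpha> * (\<Sum>j\<in>{4,5,6}. (norm (K j - K' j))\<^sup>2)
     + \<beta> * (norm (\<Sum>j\<in>{4,5,6}. K j - K' j))\<^sup>2"

lemma platform_quad_cong:
  "(\<And>j. j \<in> {4,5,6} \<Longrightarrow> K' j = K'' j) \<Longrightarrow> platform_quad \<alpha> \<beta> K K' = platform_quad \<alpha> \<beta> K K''"
  unfolding platform_quad_def by simp

(* Project k_4, k_5, k_6 onto the line and translate by the mean residual: the points stay
   collinear and the errors now sum to zero. *)
lemma exists_collinear_platform_quad_le_infdist:
  assumes "\<alpha> \<ge> 0"
  shows "\<exists>K'. C_P K' = 0 \<and>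
           platform_quad \<alpha> \<beta> K K' \<le> \<alpha> * (\<Sum>j\<in>{4,5,6}. (infdist (K j) (line c u))\<^sup>2)"
proof -
  define r where "r j = K j - line_proj c u (K j)" for j
  define m where "m = (1 / real (card {4,5,6::nat})) *\<^sub>R (\<Sum>j\<in>{4,5,6}. r j)"
  define K' where "K' j = line_proj c u (K j) + m" for j
  have "K' j \<in> line (c + m) u" for j
  proof -
    have "K' j = (c + m) + ((K j - c) \<bullet> u / (u \<bullet> u)) *\<^sub>R u"
      by (simp add: K'_def line_proj_def algebra_simps)
    then show ?thesis unfolding mem_line by blast
  qed
  then have "C_P K' = 0"
    unfolding C_P_eq_0_iff_collinear by (intro subset_line_collinear) blast
  have err: "K j - K' j = r j - m" for j
    by (simp add: K'_def r_def algebra_simps)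
  have "platform_quad \<alpha> \<beta> K K' = \<alpha> * (\<Sum>j\<in>{4,5,6}. (norm (r j - m))\<^sup>2)"
    using sum_diff_mean_eq_0[of "{4,5,6::nat}" r] by (simp add: platform_quad_def err m_def)
  also have "\<dots> \<le> \<alpha> * (\<Sum>j\<in>{4,5,6}. (norm (r j))\<^sup>2)"
    using sum_norm_diff_mean_le[of "{4,5,6::nat}" r] assms
    by (intro mult_left_mono) (simp_all add: m_def)
  also have "\<dots> = \<alpha> * (\<Sum>j\<in>{4,5,6}. (infdist (K j) (line c u))\<^sup>2)"
    by (simp add: r_def infdist_line dist_norm)
  finally show ?thesis using \<open>C_P K' = 0\<close> by blast
qed

lemma platform_quad_minimizer_on_regression_line:
  assumes "\<alpha> > 0" and "\<beta> \<ge> 0" and "C_P K' = 0"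
    and min: "\<And>K''. C_P K'' = 0 \<Longrightarrow> platform_quad \<alpha> \<beta> K K' \<le> platform_quad \<alpha> \<beta> K K''"
  shows "\<exists>L. regression_line K L \<and> (\<forall>j\<in>{4,5,6}. pedal_point (K j) L (K' j))"
proof -
  obtain c u where "u \<noteq> 0" and on_line: "{K' 4, K' 5, K' 6} \<subseteq> line c u"
    using \<open>C_P K' = 0\<close> C_P_eq_0_iff_collinear collinear_subset_line by metis
  define L where "L = line c u"
  define E where "E = (\<Sum>j\<in>{4,5,6::nat}. (norm (K j - K' j))\<^sup>2)"
  have E_le: "E \<le> (\<Sum>j\<in>{4,5,6}. (infdist (K j) (line c' u'))\<^sup>2)" for c' u'
  proof -
    obtain K'' where "C_P K'' = 0"
      and fit: "platform_quad \<alpha> \<beta> K K'' \<le> \<alpha> * (\<Sum>j\<in>{4,5,6}. (infdist (K j) (line c' u'))\<^sup>2)"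
      using exists_collinear_platform_quad_le_infdist \<open>\<alpha> > 0\<close> by (metis less_imp_le)
    have "\<alpha> * E \<le> platform_quad \<alpha> \<beta> K K'"
      using \<open>\<beta> \<ge> 0\<close> by (simp add: platform_quad_def E_def)
    also have "\<dots> \<le> platform_quad \<alpha> \<beta> K K''"
      using min \<open>C_P K'' = 0\<close> by blast
    also note fit
    finally show ?thesis
      using \<open>\<alpha> > 0\<close> by simp
  qed
  have infdist_le_err: "(infdist (K j) L)\<^sup>2 \<le> (norm (K j - K' j))\<^sup>2" if "j \<in> {4,5,6}" for j
  proof (rule power_mono)
    show "infdist (K j) L \<le> norm (K j - K' j)"
      using infdist_le[of "K' j" L "K j"] on_line that by (auto simp: L_def dist_norm)
  qed (rule infdist_nonneg)
  then have sum_le_E: "(\<Sum>j\<in>{4,5,6}. (infdist (K j) L)\<^sup>2) \<le> E"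
    unfolding E_def by (rule sum_mono)
  have "regression_line K L"
    unfolding regression_line_def is_line_iff
  proof (intro conjI allI impI)
    show "\<exists>a v. v \<noteq> 0 \<and> L = line a v" using \<open>u \<noteq> 0\<close> L_def by blast
    fix L' :: "(real^2) set" assume "\<exists>a v. v \<noteq> 0 \<and> L' = line a v"
    then obtain a v where "L' = line a v" by blast
    then show "(\<Sum>j\<in>{4,5,6}. (infdist (K j) L)\<^sup>2) \<le> (\<Sum>j\<in>{4,5,6}. (infdist (K j) L')\<^sup>2)"
      using order_trans[OF sum_le_E E_le[of a v]] by simp
  qed
  moreover have "pedal_point (K j) L (K' j)" if j: "j \<in> {4,5,6}" for j
  proof -
    have "(\<Sum>j\<in>{4,5,6}. (infdist (K j) L)\<^sup>2) = E"
      using sum_le_E E_le[of c u] L_def by simp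
    then have "(infdist (K j) L)\<^sup>2 = (norm (K j - K' j))\<^sup>2"
      using sum_mono_inv[OF _ infdist_le_err j] unfolding E_def by simp
    then have "dist (K j) (K' j) \<le> infdist (K j) L"
      by (simp add: dist_norm infdist_nonneg)
    then have "K' j = line_proj c u (K j)"
      using nearest_point_on_line_eq_line_proj on_line j L_def by auto
    then show ?thesis
      using pedal_point_line_proj L_def by simp
  qed
  ultimately show ?thesis by blast
qed

section \<open>Eliminating the base points from the metrics\<close>

lemma seg_form_nonneg:
  fixes a b :: "'a::real_inner"
  shows "0 \<le> (norm a)\<^sup>2 + (norm b)\<^sup>2 + a \<bullet> b"
  using dot_norm[of a b] zero_le_power2[of "norm (a + b)"] zero_le_power2[of "norm a"]
    zero_le_power2[of "norm b"] by argo

lemma tri_form_nonneg: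
  fixes a b c :: "'a::real_inner"
  shows "0 \<le> (norm a)\<^sup>2 + (norm b)\<^sup>2 + (norm c)\<^sup>2 + a \<bullet> c + a \<bullet> b + c \<bullet> b"
  using dot_norm[of "a + b" c] dot_norm[of a b] inner_add_left[of a b c] inner_commute[of c b]
    zero_le_power2[of "norm (a + b + c)"] zero_le_power2[of "norm a"]
    zero_le_power2[of "norm b"] zero_le_power2[of "norm c"] by argo

lemma seg_dist_sq:
  "(seg_dist K K' i j)\<^sup>2
     = (1/3) * ((norm (K i - K' i))\<^sup>2 + (norm (K j - K' j))\<^sup>2 + (K i - K' i) \<bullet> (K j - K' j))"
  unfolding seg_dist_def by (rule real_sqrt_pow2) (simp add: seg_form_nonneg)

lemma tri_dist_sq:
  "(tri_dist K K' i j k)\<^sup>2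
     = (1/6) * ((norm (K i - K' i))\<^sup>2 + (norm (K j - K' j))\<^sup>2 + (norm (K k - K' k))\<^sup>2
        + (K i - K' i) \<bullet> (K k - K' k) + (K i - K' i) \<bullet> (K j - K' j) + (K k - K' k) \<bullet> (K j - K' j))"
  unfolding tri_dist_def by (rule real_sqrt_pow2) (simp add: tri_form_nonneg)

lemma D_tri_full_nonneg: "0 \<le> D_tri_full K K'"
  unfolding D_tri_full_def by (auto intro!: mult_nonneg_nonneg add_nonneg_nonneg sum_nonneg)

lemma D_tri_tri_nonneg: "0 \<le> D_tri_tri K K'"
  unfolding D_tri_tri_def by (auto intro!: mult_nonneg_nonneg sum_nonneg)

(* The base points k'_1, k'_2, k'_3 enter the squared metrics only through these residuals,
   and choosing them freely makes the residuals vanish. *)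
definition base_residual :: "real \<Rightarrow> real \<Rightarrow> config \<Rightarrow> config \<Rightarrow> nat \<Rightarrow> real^2" where
  "base_residual a b K K' i
     = (K i - K' i) + a *\<^sub>R (K (i + 3) - K' (i + 3)) - b *\<^sub>R (\<Sum>j\<in>{4,5,6}. K j - K' j)"

lemma D_tri_full_sq:
  "(D_tri_full K K')\<^sup>2 = platform_quad (23/210) (1/40) K K'
     + (5/84) * (\<Sum>i\<in>{1,2,3}. (norm (base_residual (2/5) (1/20) K K' i))\<^sup>2)
     + (1/84) * (norm (\<Sum>i\<in>{1,2,3}. base_residual (2/5) (1/20) K K' i))\<^sup>2"
proof -
  define e where "e i = K i - K' i" for i
  have K': "K' = (\<lambda>i. K i - e i)" by (simp add: e_def fun_eq_iff)
  have "(D_tri_full K K')\<^sup>2 = (1/7) * ((\<Sum>(i,j)\<in>I2. (seg_dist K K' i j)\<^sup>2) + (tri_dist K K' 1 2 3)\<^sup>2)"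
    unfolding D_tri_full_def
    by (rule real_sqrt_pow2) (auto intro!: mult_nonneg_nonneg add_nonneg_nonneg sum_nonneg)
  also have "\<dots> = platform_quad (23/210) (1/40) K K'
     + (5/84) * (\<Sum>i\<in>{1,2,3}. (norm (base_residual (2/5) (1/20) K K' i))\<^sup>2)
     + (1/84) * (norm (\<Sum>i\<in>{1,2,3}. base_residual (2/5) (1/20) K K' i))\<^sup>2"
    unfolding seg_dist_sq tri_dist_sq platform_quad_def base_residual_def K'
      power2_norm_vec2 inner_vec2
    by (simp add: I2_def power2_eq_square field_simps)
  finally show ?thesis .
qed

lemma D_tri_tri_sq:
  "(D_tri_tri K K')\<^sup>2 = platform_quad (4/45) (41/2160) K K'
     + (5/54) * (\<Sum>i\<in>{1,2,3}. (norm (base_residual (1/5) (1/40) K K' i))\<^sup>2)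
     + (1/54) * (norm (\<Sum>i\<in>{1,2,3}. base_residual (1/5) (1/40) K K' i))\<^sup>2"
proof -
  define e where "e i = K i - K' i" for i
  have K': "K' = (\<lambda>i. K i - e i)" by (simp add: e_def fun_eq_iff)
  have "(D_tri_tri K K')\<^sup>2 = (1/9) * (\<Sum>(i,j)\<in>I4. (seg_dist K K' i j)\<^sup>2)"
    unfolding D_tri_tri_def
    by (rule real_sqrt_pow2) (auto intro!: mult_nonneg_nonneg sum_nonneg)
  also have "\<dots> = platform_quad (4/45) (41/2160) K K'
     + (5/54) * (\<Sum>i\<in>{1,2,3}. (norm (base_residual (1/5) (1/40) K K' i))\<^sup>2)
     + (1/54) * (norm (\<Sum>i\<in>{1,2,3}. base_residual (1/5) (1/40) K K' i))\<^sup>2"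
    unfolding seg_dist_sq platform_quad_def base_residual_def K' power2_norm_vec2 inner_vec2
    by (simp add: I4_def power2_eq_square field_simps)
  finally show ?thesis .
qed

lemma dist_minimizer_minimizes_platform_quad:
  fixes D :: "config \<Rightarrow> config \<Rightarrow> real"
  assumes nonneg: "\<And>K'. 0 \<le> D K K'"
    and decomp: "\<And>K'. (D K K')\<^sup>2 = platform_quad \<alpha> \<beta> K K'
          + \<gamma> * (\<Sum>i\<in>{1,2,3}. (norm (base_residual a b K K' i))\<^sup>2)
          + \<delta> * (norm (\<Sum>i\<in>{1,2,3}. base_residual a b K K' i))\<^sup>2"
    and "\<gamma> \<ge> 0" and "\<delta> \<ge> 0"
    and min: "\<And>K''. C_P K'' = 0 \<Longrightarrow> D K K' \<le> D K K''"
    and "C_P K'' = 0"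
  shows "platform_quad \<alpha> \<beta> K K' \<le> platform_quad \<alpha> \<beta> K K''"
proof -
  define K3 where "K3 i = (if i \<le> 3
      then K i + a *\<^sub>R (K (i + 3) - K'' (i + 3)) - b *\<^sub>R (\<Sum>j\<in>{4,5,6}. K j - K'' j)
      else K'' i)" for i
  have agree: "K3 j = K'' j" if "j \<in> {4,5,6}" for j
    using that by (auto simp: K3_def)
  have "base_residual a b K K3 i = 0" if "i \<in> {1,2,3}" for i
    using that by (auto simp: base_residual_def K3_def)
  then have D_K3: "(D K K3)\<^sup>2 = platform_quad \<alpha> \<beta> K K3"
    by (simp add: decomp)
  have "C_P K3 = 0"
    using C_P_cong[OF agree] \<open>C_P K'' = 0\<close> by simp
  have "platform_quad \<alpha> \<beta> K K' \<le> (D K K')\<^sup>2"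
    using \<open>\<gamma> \<ge> 0\<close> \<open>\<delta> \<ge> 0\<close> by (simp add: decomp sum_nonneg)
  also have "\<dots> \<le> (D K K3)\<^sup>2"
    using min[OF \<open>C_P K3 = 0\<close>] nonneg by (simp add: power_mono)
  also have "\<dots> = platform_quad \<alpha> \<beta> K K''"
    using D_K3 platform_quad_cong[OF agree] by simp
  finally show ?thesis .
qed

lemma dist_minimizer_on_regression_line:
  fixes D :: "config \<Rightarrow> config \<Rightarrow> real"
  assumes "\<And>K'. 0 \<le> D K K'"
    and "\<And>K'. (D K K')\<^sup>2 = platform_quad \<alpha> \<beta> K K'
          + \<gamma> * (\<Sum>i\<in>{1,2,3}. (norm (base_residual a b K K' i))\<^sup>2)
          + \<delta> * (norm (\<Sum>i\<in>{1,2,3}. base_residual a b K K' i))\<^sup>2"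
    and "\<alpha> > 0" and "\<beta> \<ge> 0" and "\<gamma> \<ge> 0" and "\<delta> \<ge> 0"
    and "C_P K' = 0" and "\<forall>K''. C_P K'' = 0 \<longrightarrow> D K K' \<le> D K K''"
  shows "\<exists>L. regression_line K L \<and> (\<forall>j\<in>{4,5,6}. pedal_point (K j) L (K' j))"
  using assms(3,4,7) dist_minimizer_minimizes_platform_quad[where D = D and K = K, OF assms(1,2,5,6)] assms(8)
  by (intro platform_quad_minimizer_on_regression_line) blast+

section \<open>Independence of the pose\<close>

lemma orthogonal_matrix_inner:
  fixes Q :: "real^'n^'n"
  assumes "orthogonal_matrix Q"
  shows "(Q *v x) \<bullet> (Q *v y) = x \<bullet> y"
  using assms orthogonal_transformation_matrix[of "(*v) Q"]
  by (simp add: orthogonal_transformation_def matrix_vector_mul_linear)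

lemma C_P_affine: "C_P (\<lambda>j. Q *v K j + w) = det Q * C_P K"
  unfolding C_P_def det_2 by (simp add: matrix_vector_mult_def sum_2 algebra_simps)

definition orthogonally_invariant :: "(config \<Rightarrow> config \<Rightarrow> real) \<Rightarrow> bool" where
  "orthogonally_invariant D \<longleftrightarrow> (\<forall>Q K K' L L'. orthogonal_matrix Q
      \<and> (\<forall>i. L i - L' i = Q *v (K i - K' i)) \<longrightarrow> D L L' = D K K')"

lemma orthogonally_invariantD:
  "orthogonally_invariant D \<Longrightarrow> orthogonal_matrix Q \<Longrightarrow> (\<And>i. L i - L' i = Q *v (K i - K' i))
    \<Longrightarrow> D L L' = D K K'"
  unfolding orthogonally_invariant_def by blast

lemma orthogonally_invariant_D_tri_full: "orthogonally_invariant D_tri_full"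
  unfolding orthogonally_invariant_def D_tri_full_def seg_dist_def tri_dist_def
  by (auto simp: orthogonal_matrix_inner norm_eq_sqrt_inner)

lemma orthogonally_invariant_D_tri_tri: "orthogonally_invariant D_tri_tri"
  unfolding orthogonally_invariant_def D_tri_tri_def seg_dist_def
  by (auto simp: orthogonal_matrix_inner norm_eq_sqrt_inner)

lemma collinear_dist_values_pose_subset:
  assumes D: "orthogonally_invariant D" and "R \<in> SO2" and "R2 \<in> SO2"
  shows "{D (pose_config b p R t) K' | K'. C_P K' = 0} \<subseteq> {D (pose_config b p R2 t2) K' | K'. C_P K' = 0}"
proof clarify
  fix K' assume "C_P K' = 0"
  define K where "K = pose_config b p R t"
  define K2 where "K2 = pose_config b p R2 t2"
  define Q where "Q = R2 ** transpose R"
  (* K' carried along by the rigid motion that takes the pose (R, t) to (R2, t2) *)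
  define K2' where "K2' i = K2 i - Q *v (K i - K' i)" for i
  have R: "orthogonal_matrix R" "det R = 1" and R2: "orthogonal_matrix R2" "det R2 = 1"
    using \<open>R \<in> SO2\<close> \<open>R2 \<in> SO2\<close> unfolding SO2_def by auto
  have "orthogonal_matrix Q"
    unfolding Q_def using R R2 by (simp add: orthogonal_matrix_mul)
  have "det Q = 1"
    unfolding Q_def using R R2 by (simp add: det_mul det_transpose)
  have QR: "Q ** R = R2"
    unfolding Q_def using R(1) by (metis matrix_mul_assoc matrix_mul_rid orthogonal_matrix)
  have "D K2 K2' = D K K'"
    using orthogonally_invariantD[OF D \<open>orthogonal_matrix Q\<close>] by (simp add: K2'_def)
  have "K j = R *v p j + t" and "K2 j = R2 *v p j + t2" if "j \<in> {4,5,6}" for j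
    using that by (auto simp: K_def K2_def pose_config_def)
  then have "K2' j = Q *v K' j + (t2 - Q *v t)" if "j \<in> {4,5,6}" for j
    using that
    by (simp add: K2'_def matrix_vector_right_distrib matrix_vector_mult_diff_distrib
        matrix_vector_mul_assoc QR algebra_simps)
  then have "C_P K2' = C_P (\<lambda>j. Q *v K' j + (t2 - Q *v t))"
    by (rule C_P_cong)
  also have "\<dots> = 0"
    using \<open>C_P K' = 0\<close> \<open>det Q = 1\<close> by (simp add: C_P_affine)
  finally show "\<exists>K''. D (pose_config b p R t) K' = D (pose_config b p R2 t2) K'' \<and> C_P K'' = 0"
    using \<open>D K2 K2' = D K K'\<close> unfolding K_def K2_def by metis
qed

lemma collinear_dist_values_pose_eq:
  assumes "orthogonally_invariant D" and "R \<in> SO2" and "R2 \<in> SO2"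
  shows "{D (pose_config b p R t) K' | K'. C_P K' = 0} = {D (pose_config b p R2 t2) K' | K'. C_P K' = 0}"
  using collinear_dist_values_pose_subset[OF assms] collinear_dist_values_pose_subset[OF assms(1,3,2)]
  by (rule subset_antisym)

theorem theorem1:
  fixes b p :: config and R :: "real^2^2" and t :: "real^2"
    and D :: "config \<Rightarrow> config \<Rightarrow> real"
  assumes R: "R \<in> SO2"
    and D: "D = D_tri_full \<or> D = D_tri_tri"
  shows "(\<forall>K'. C_P K' = 0 \<and> (\<forall>K''. C_P K'' = 0 \<longrightarrow> D (pose_config b p R t) K' \<le> D (pose_config b p R t) K'')
            \<longrightarrow> (\<exists>L. regression_line (pose_config b p R t) L \<and>
                     (\<forall>j\<in>{4,5,6}. pedal_point (pose_config b p R t j) L (K' j))))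
       \<and> (\<forall>R2 t2. R2 \<in> SO2 \<longrightarrow>
            Inf {D (pose_config b p R t) K' | K'. C_P K' = 0}
            = Inf {D (pose_config b p R2 t2) K' | K'. C_P K' = 0})"
proof (intro conjI allI impI)
  fix K'
  let ?K = "pose_config b p R t"
  assume "C_P K' = 0 \<and> (\<forall>K''. C_P K'' = 0 \<longrightarrow> D ?K K' \<le> D ?K K'')"
  with D show "\<exists>L. regression_line ?K L \<and> (\<forall>j\<in>{4,5,6}. pedal_point (?K j) L (K' j))"
    using dist_minimizer_on_regression_line[where D = D_tri_full and K = ?K,
        OF D_tri_full_nonneg D_tri_full_sq]
      dist_minimizer_on_regression_line[where D = D_tri_tri and K = ?K,
        OF D_tri_tri_nonneg D_tri_tri_sq]
    by auto
next
  fix R2 t2 assume "R2 \<in> SO2"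
  have "orthogonally_invariant D"
    using D orthogonally_invariant_D_tri_full orthogonally_invariant_D_tri_tri by auto
  from collinear_dist_values_pose_eq[OF this R \<open>R2 \<in> SO2\<close>, of b p t t2]
  show "Inf {D (pose_config b p R t) K' | K'. C_P K' = 0}
            = Inf {D (pose_config b p R2 t2) K' | K'. C_P K' = 0}"
    by (rule arg_cong)
qed

end
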